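(* Under the setting below, let $(\hat x,\hat z)$ be generated by the online strategy $\mathcal A$ with positive, nonincreasing step sizes $\eta_1\ge\eta_2\ge\dots\ge\eta_T>0$. Then $$G_T(\mathcal A)\le\frac{1}{T}\Big(\frac{\pi^2}{2}\frac{1}{\eta_T}+\Big(\frac{\Xi^2}{2}+\Xi\Psi\Big)\sum_{t=1}^T\eta_t\Big).$$ In particular, with constant step size $\eta_t=\frac{\pi}{\Xi\sqrt T}$ for all $t$, $G_T(\mathcal A)\le\frac{\pi(\Xi+\Psi)}{\sqrt T}$.
   Context: Fix an integer $T\ge 1$, a data cap $Q>0$ and an overage fee $\pi>0$; let $q=Q/T$. Fix constants $\bar d\ge 0$, $\bar r\ge 0$. For each $t\in\{1,\dots,T\}$ fix reals $d_t\in[0,\bar d]$, $r_t\in[0,\bar r]$, $c_t>0$, $p_t>0$, $\theta_t>0$, $\beta_t>0$ and functions $u_t,e_t:[0,\infty)\to\mathbb{R}$ such that: $u_t$ is continuous, increasing and strictly concave, differentiable on $(0,\infty)$, and $u_t':(0,\infty)\to(0,\infty)$ is a strictly decreasing bijection with inverse $u_t'^{-1}$; $e_t$ is increasing, strictly convex and continuously differentiable, and $e_t':[0,\infty)\to[0,\infty)$ is a strictly increasing bijection with inverse $e_t'^{-1}$. For $0\le z\le x\le 1$ let $\tilde f_t(x,z)=\theta_t u_t(x)-\beta_t e_t((x-z)c_t)-p_t c_t z$ and $\tilde h_t(x,z)=d_t x+r_t z$. For $x,z\in[0,1]^T$ with $z_t\le x_t$ define the payoff $\tilde S(x,z)=\sum_{t=1}^T\tilde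 f_t(x_t,z_t)-\pi\big[\sum_{t=1}^T\tilde h_t(x_t,z_t)-Q\big]^+$, and let $(x^*,z^* )$ be a maximizer of $\tilde S$ over $\{0\le z_t\le x_t\le 1\ \forall t\}$. For $\lambda\ge 0$ and $\beta>0$ write $a_t(\beta,\lambda)=\frac{1}{c_t}\,e_t'^{-1}\!\Big(\frac{p_tc_t+r_t\lambda}{\beta c_t}\Big)$ and $X_t(\lambda)=p_tc_t+(d_t+r_t)\lambda$. Define the sets (all with $\beta>0$): $\Omega^{I}_t(\lambda)=\{(\beta,\theta):\theta>\frac{\beta c_t e_t'(c_t)+d_t\lambda}{u_t'(1)},\ \beta<\frac{p_tc_t+r_t\lambda}{c_te_t'(c_t)}\}$; $\Omega^{II}_t(\lambda)=\{(\beta,\theta):\theta>\frac{X_t(\lambda)}{u_t'(1)},\ \beta\ge\frac{p_tc_t+r_t\lambda}{c_te_t'(c_t)}\}$; $\Omega^{III}_t(\lambda)=\{(\beta,\theta):\frac{X_t(\lambda)}{u_t'(a_t(\beta,\lambda))}\le\theta\le\frac{X_t(\lambda)}{u_t'(1)}\}$; $\Omega^{IV}_t(\lambda)=\{(\beta,\theta):\theta<\frac{X_t(\lambda)}{u_t'(a_t(\beta,\lambda))},\ \theta\le\frac{\beta c_te_t'(c_t)+d_t\lambda}{u_t'(1)}\}$. Let $z^{II}_t(\lambda)=1-a_t(\beta_t,\lambda)$, $x^{III}_t(\lambda)=u_t'^{-1}(X_t(\lambda)/\theta_t)$, $z^{III}_t(\lambda)=x^{III}_t(\lambda)-a_t(\beta_t,\lambda)$,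 and let $x^{IV}_t(\lambda)\in(0,1]$ be the solution of $\theta_tu_t'(x)-\beta_tc_te_t'(xc_t)=d_t\lambda$. Define $W_t(\lambda)=(1,0)$ if $(\beta_t,\theta_t)\in\Omega^I_t(\lambda)$; $(1,z^{II}_t(\lambda))$ if in $\Omega^{II}_t(\lambda)$; $(x^{III}_t(\lambda),z^{III}_t(\lambda))$ if in $\Omega^{III}_t(\lambda)$; $(x^{IV}_t(\lambda),0)$ if in $\Omega^{IV}_t(\lambda)$. Online strategy $\mathcal A$: set $\hat\lambda_1=0$; for $t=1,\dots,T$ set $(\hat x_t,\hat z_t)=W_t(\hat\lambda_t)$ and $\hat\lambda_{t+1}=\mathcal P_{[0,\pi]}\big(\hat\lambda_t+\eta_t[\tilde h_t(\hat x_t,\hat z_t)-q]\big)$, where $\mathcal P_{[0,\pi]}$ is the projection onto $[0,\pi]$. The payoff gap is $G_T(\mathcal A)=\frac1T[\tilde S(x^*,z^* )-\tilde S(\hat x,\hat z)]$. Maximal demand divergence: $\Xi=\max(|q-\bar d-\bar r|,q)$. Consumption fluctuation: with $l_t=q-\tilde h_t(x_t^*,z_t^* )$, $\bar l=\frac1T\sum_{t=1}^Tl_t$, $\psi_t=|t\bar l-\sum_{i=1}^tl_i|$, set $\Psi=\max_{1\le t\le T}\psi_t$. *)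

theory Defs
  imports "HOL-Analysis.Analysis"
begin

definition strict_convex_on :: "real set \<Rightarrow> (real \<Rightarrow> real) \<Rightarrow> bool" where
  "strict_convex_on S f \<longleftrightarrow> convex S \<and>
     (\<forall>x\<in>S. \<forall>y\<in>S. \<forall>a. x \<noteq> y \<and> 0 < a \<and> a < 1 \<longrightarrow>
        f (a * x + (1 - a) * y) < a * f x + (1 - a) * f y)"

definition strict_concave_on :: "real set \<Rightarrow> (real \<Rightarrow> real) \<Rightarrow> bool" where
  "strict_concave_on S f \<longleftrightarrow> strict_convex_on S (\<lambda>x. - f x)"

definition proj :: "real \<Rightarrow> real \<Rightarrow> real" where
  "proj fee v = max 0 (min fee v)"

definition hfun :: "(nat \<Rightarrow> real) \<Rightarrow> (nat \<Rightarrow> real) \<Rightarrow> nat \<Rightarrow> real \<Rightarrow> real \<Rightarrow> real" where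
  "hfun d r t x z = d t * x + r t * z"

definition ffun :: "(nat \<Rightarrow> real \<Rightarrow> real) \<Rightarrow> (nat \<Rightarrow> real \<Rightarrow> real) \<Rightarrow> (nat \<Rightarrow> real) \<Rightarrow> (nat \<Rightarrow> real)
    \<Rightarrow> (nat \<Rightarrow> real) \<Rightarrow> (nat \<Rightarrow> real) \<Rightarrow> nat \<Rightarrow> real \<Rightarrow> real \<Rightarrow> real" where
  "ffun u e c p \<theta> \<beta> t x z = \<theta> t * u t x - \<beta> t * e t ((x - z) * c t) - p t * c t * z"

definition Spay :: "nat \<Rightarrow> real \<Rightarrow> real \<Rightarrow> (nat \<Rightarrow> real \<Rightarrow> real) \<Rightarrow> (nat \<Rightarrow> real \<Rightarrow> real)
    \<Rightarrow> (nat \<Rightarrow> real) \<Rightarrow> (nat \<Rightarrow> real) \<Rightarrow> (nat \<Rightarrow> real) \<Rightarrow> (nat \<Rightarrow> real) \<Rightarrow> (nat \<Rightarrow> real) \<Rightarrow> (nat \<Rightarrow> real)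
    \<Rightarrow> (nat \<Rightarrow> real) \<Rightarrow> (nat \<Rightarrow> real) \<Rightarrow> real" where
  "Spay T Q fee u e c p \<theta> \<beta> d r x z =
     (\<Sum>t=1..T. ffun u e c p \<theta> \<beta> t (x t) (z t))
     - fee * max 0 ((\<Sum>t=1..T. hfun d r t (x t) (z t)) - Q)"

definition feasible :: "nat \<Rightarrow> (nat \<Rightarrow> real) \<Rightarrow> (nat \<Rightarrow> real) \<Rightarrow> bool" where
  "feasible T x z \<longleftrightarrow> (\<forall>t\<in>{1..T}. 0 \<le> z t \<and> z t \<le> x t \<and> x t \<le> 1)"

definition a_fn :: "(nat \<Rightarrow> real \<Rightarrow> real) \<Rightarrow> (nat \<Rightarrow> real) \<Rightarrow> (nat \<Rightarrow> real) \<Rightarrow> (nat \<Rightarrow> real)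
    \<Rightarrow> nat \<Rightarrow> real \<Rightarrow> real \<Rightarrow> real" where
  "a_fn e' c p r t b l = (1 / c t) * inv_into {0..} (e' t) ((p t * c t + r t * l) / (b * c t))"

definition X_fn :: "(nat \<Rightarrow> real) \<Rightarrow> (nat \<Rightarrow> real) \<Rightarrow> (nat \<Rightarrow> real) \<Rightarrow> (nat \<Rightarrow> real) \<Rightarrow> nat \<Rightarrow> real \<Rightarrow> real" where
  "X_fn c p d r t l = p t * c t + (d t + r t) * l"

definition OmegaI where
  "OmegaI u' e' c p d r t l b th \<longleftrightarrow> b > 0 \<and>
     th > (b * c t * e' t (c t) + d t * l) / u' t 1 \<and>
     b < (p t * c t + r t * l) / (c t * e' t (c t))"

definition OmegaII where
  "OmegaII u' e' c p d r t l b th \<longleftrightarrow> b > 0 \<and>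
     th > X_fn c p d r t l / u' t 1 \<and>
     b \<ge> (p t * c t + r t * l) / (c t * e' t (c t))"

definition OmegaIII where
  "OmegaIII u' e' c p d r t l b th \<longleftrightarrow> b > 0 \<and>
     X_fn c p d r t l / u' t (a_fn e' c p r t b l) \<le> th \<and>
     th \<le> X_fn c p d r t l / u' t 1"

definition OmegaIV where
  "OmegaIV u' e' c p d r t l b th \<longleftrightarrow> b > 0 \<and>
     th < X_fn c p d r t l / u' t (a_fn e' c p r t b l) \<and>
     th \<le> (b * c t * e' t (c t) + d t * l) / u' t 1"

definition W_fn :: "(nat \<Rightarrow> real \<Rightarrow> real) \<Rightarrow> (nat \<Rightarrow> real \<Rightarrow> real) \<Rightarrow> (nat \<Rightarrow> real) \<Rightarrow> (nat \<Rightarrow> real)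
    \<Rightarrow> (nat \<Rightarrow> real) \<Rightarrow> (nat \<Rightarrow> real) \<Rightarrow> (nat \<Rightarrow> real) \<Rightarrow> (nat \<Rightarrow> real) \<Rightarrow> nat \<Rightarrow> real \<Rightarrow> real \<times> real" where
  "W_fn u' e' c p d r \<theta> \<beta> t l =
    (if OmegaI u' e' c p d r t l (\<beta> t) (\<theta> t) then (1, 0)
     else if OmegaII u' e' c p d r t l (\<beta> t) (\<theta> t) then (1, 1 - a_fn e' c p r t (\<beta> t) l)
     else if OmegaIII u' e' c p d r t l (\<beta> t) (\<theta> t) then
       (inv_into {0<..} (u' t) (X_fn c p d r t l / \<theta> t),
        inv_into {0<..} (u' t) (X_fn c p d r t l / \<theta> t) - a_fn e' c p r t (\<beta> t) l)
     else if OmegaIV u' e' c p d r t l (\<beta> t) (\<theta> t) then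
       (THE x. 0 < x \<and> x \<le> 1 \<and>
          \<theta> t * u' t x - \<beta> t * c t * e' t (x * c t) = d t * l, 0)
     else undefined)"

(* dual iterates: lam_seq n = hat-lambda_{n+1}; hat-lambda_1 = 0 *)
primrec lam_seq :: "nat \<Rightarrow> real \<Rightarrow> real \<Rightarrow> (nat \<Rightarrow> real \<Rightarrow> real) \<Rightarrow> (nat \<Rightarrow> real \<Rightarrow> real) \<Rightarrow> (nat \<Rightarrow> real)
    \<Rightarrow> (nat \<Rightarrow> real) \<Rightarrow> (nat \<Rightarrow> real) \<Rightarrow> (nat \<Rightarrow> real) \<Rightarrow> (nat \<Rightarrow> real) \<Rightarrow> (nat \<Rightarrow> real)
    \<Rightarrow> (nat \<Rightarrow> real) \<Rightarrow> nat \<Rightarrow> real" where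
  "lam_seq T Q fee u' e' c p d r \<theta> \<beta> \<eta> 0 = 0"
| "lam_seq T Q fee u' e' c p d r \<theta> \<beta> \<eta> (Suc n) =
     (let l = lam_seq T Q fee u' e' c p d r \<theta> \<beta> \<eta> n;
          w = W_fn u' e' c p d r \<theta> \<beta> (Suc n) l
      in proj fee (l + \<eta> (Suc n) * (hfun d r (Suc n) (fst w) (snd w) - Q / real T)))"

definition online_dec where
  "online_dec T Q fee u' e' c p d r \<theta> \<beta> \<eta> t =
     W_fn u' e' c p d r \<theta> \<beta> t (lam_seq T Q fee u' e' c p d r \<theta> \<beta> \<eta> (t - 1))"

definition gap where
  "gap T Q fee u e u' e' c p d r \<theta> \<beta> \<eta> xs zs =
     (Spay T Q fee u e c p \<theta> \<beta> d r xs zs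
      - Spay T Q fee u e c p \<theta> \<beta> d r
          (\<lambda>t. fst (online_dec T Q fee u' e' c p d r \<theta> \<beta> \<eta> t))
          (\<lambda>t. snd (online_dec T Q fee u' e' c p d r \<theta> \<beta> \<eta> t))) / real T"

definition Xi :: "nat \<Rightarrow> real \<Rightarrow> real \<Rightarrow> real \<Rightarrow> real" where
  "Xi T Q dbar rbar = max \<bar>Q / real T - dbar - rbar\<bar> (Q / real T)"

definition Psi :: "nat \<Rightarrow> real \<Rightarrow> (nat \<Rightarrow> real) \<Rightarrow> (nat \<Rightarrow> real) \<Rightarrow> (nat \<Rightarrow> real) \<Rightarrow> (nat \<Rightarrow> real) \<Rightarrow> real" where
  "Psi T Q d r xs zs =
     (let l = (\<lambda>t. Q / real T - hfun d r t (xs t) (zs t));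
          lbar = (\<Sum>t=1..T. l t) / real T
      in Max ((\<lambda>t. \<bar>real t * lbar - (\<Sum>i=1..t. l i)\<bar>) ` {1..T}))"

end

theory Submission
  imports Defs
begin

text \<open>For a fixed price \<open>l \<ge> 0\<close> of consumption, the Lagrangian \<open>f_t - l h_t\<close> is concave in the
  coordinates \<open>x\<close> and \<open>x - z\<close>, and in each of the regions \<open>\<Omega>^I, \<dots>, \<Omega>^IV\<close> the point
  \<open>W_t(l)\<close> satisfies the first-order conditions with the right signs, so the tangent-plane
  inequality shows that it maximises the Lagrangian over the feasible triangle. Hence in every
  period the online payoff exceeds that of any feasible comparator up to the price \<open>\<lambda>_t\<close> times
  the difference of consumptions. Summing over the periods, the gap splits into the regret of
  projected gradient descent on the prices against the best fixed price in \<open>[0, \<pi>]\<close>, which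
  telescopes to \<open>\<pi>\<^sup>2/(2\<eta>_T) + \<Xi>\<^sup>2/2 \<Sum> \<eta>_t\<close>, and the term \<open>\<Sum> \<lambda>_t (l_t - m)\<close>, with \<open>m\<close> the
  mean of the \<open>l_t\<close>, which summation by parts bounds by \<open>\<Xi> \<Psi> \<Sum> \<eta>_t\<close> because a price
  moves by at most \<open>\<eta>_t \<Xi>\<close> per period.\<close>

lemma convex_on_if_strict_convex_on:
  fixes f :: "real \<Rightarrow> real"
  assumes "strict_convex_on S f"
  shows "convex_on S f"
proof (rule convex_onI)
  show "convex S" using assms unfolding strict_convex_on_def by auto
next
  fix a x y :: real assume a: "0 < a" "a < 1" and xy: "x \<in> S" "y \<in> S"
  show "f ((1 - a) *\<^sub>R x + a *\<^sub>R y) \<le> (1 - a) * f x + a * f y"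
  proof (cases "x = y")
    case False
    have strict: "\<forall>x\<in>S. \<forall>y\<in>S. \<forall>a. x \<noteq> y \<and> 0 < a \<and> a < 1 \<longrightarrow>
        f (a * x + (1 - a) * y) < a * f x + (1 - a) * f y"
      using assms unfolding strict_convex_on_def by blast
    then have "f ((1 - a) * x + (1 - (1 - a)) * y) < (1 - a) * f x + (1 - (1 - a)) * f y"
      using strict[rule_format, of x y "1 - a"] a xy False by linarith
    then show ?thesis by simp
  qed (simp add: algebra_simps)
qed

lemma convex_on_Ici_above_tangent:
  fixes f :: "real \<Rightarrow> real"
  assumes "convex_on {0..} f" and "(f has_real_derivative f') (at x0 within {0..})"
    and "x0 > 0" and "x \<ge> 0"
  shows "f x \<ge> f x0 + f' * (x - x0)"
proof -
  have "f' * (x - x0) \<le> f x - f x0"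
    by (rule convex_on_imp_above_tangent[OF assms(1) connected_Ici _ _ assms(2)]) (use assms in simp_all)
  then show ?thesis by simp
qed

lemma continuous_on_if_antimono_open_image:
  fixes g :: "real \<Rightarrow> real"
  assumes anti: "\<And>x y. x \<in> A \<Longrightarrow> y \<in> A \<Longrightarrow> x \<le> y \<Longrightarrow> g y \<le> g x" and "open (g ` A)"
  shows "continuous_on A g"
proof -
  have "open ((\<lambda>x. - g x) ` A)"
    using open_negations[OF \<open>open (g ` A)\<close>] by (simp add: image_image)
  then have "continuous_on A (\<lambda>x. - g x)"
    by (rule continuous_onI_mono) (use anti in auto)
  then show ?thesis
    using continuous_on_minus by fastforce
qed

lemma mono_on_onto_Ici_fixes_zero:
  fixes g :: "real \<Rightarrow> real"
  assumes "mono_on {0..} g" and "g ` {0..} = {0..}"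
  shows "g 0 = 0"
proof -
  obtain y where "y \<ge> 0" "g y = 0"
    using assms(2) by (metis atLeast_iff image_iff order_refl)
  then have "g 0 \<le> 0" using mono_onD[OF assms(1), of 0 y] by simp
  moreover have "g 0 \<ge> 0" using assms(2) by auto
  ultimately show ?thesis by simp
qed

locale lagrangian_period =
  fixes u e u' e' :: "nat \<Rightarrow> real \<Rightarrow> real" and c p \<theta> \<beta> d r :: "nat \<Rightarrow> real" and t :: nat
  assumes c_pos: "c t > 0" and p_pos: "p t > 0" and \<theta>_pos: "\<theta> t > 0" and \<beta>_pos: "\<beta> t > 0"
    and d_nonneg: "d t \<ge> 0" and r_nonneg: "r t \<ge> 0"
    and u_concave: "strict_concave_on {0..} (u t)"
    and u_deriv: "\<And>x. x > 0 \<Longrightarrow> (u t has_real_derivative u' t x) (at x)"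
    and u'_decreasing: "\<And>x y. 0 < x \<Longrightarrow> x < y \<Longrightarrow> u' t y < u' t x"
    and u'_bij: "bij_betw (u' t) {0<..} {0<..}"
    and e_mono: "mono_on {0..} (e t)" and e_convex: "strict_convex_on {0..} (e t)"
    and e_deriv: "\<And>x. x \<ge> 0 \<Longrightarrow> (e t has_real_derivative e' t x) (at x within {0..})"
    and e'_cont: "continuous_on {0..} (e' t)" and e'_strict_mono: "strict_mono_on {0..} (e' t)"
    and e'_bij: "bij_betw (e' t) {0..} {0..}"
begin

lemma e'_zero: "e' t 0 = 0"
  using mono_on_onto_Ici_fixes_zero strict_mono_on_imp_mono_on[OF e'_strict_mono] e'_bij
  by (simp add: bij_betw_def)

lemma e'_less: "0 \<le> x \<Longrightarrow> x < y \<Longrightarrow> e' t x < e' t y"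
  using strict_mono_onD[OF e'_strict_mono, of x y] by simp

lemma e'_le: "0 \<le> x \<Longrightarrow> x \<le> y \<Longrightarrow> e' t x \<le> e' t y"
  using e'_less[of x y] by (cases "x = y") auto

lemma e'_le_iff: "0 \<le> x \<Longrightarrow> 0 \<le> y \<Longrightarrow> e' t x \<le> e' t y \<longleftrightarrow> x \<le> y"
  by (metis e'_le e'_less not_le)

lemma e'_c_pos: "e' t (c t) > 0"
  using e'_less[of 0 "c t"] e'_zero c_pos by simp

lemma u'_pos: "0 < x \<Longrightarrow> u' t x > 0"
  using u'_bij by (auto simp: bij_betw_def)

lemma u'_le: "0 < x \<Longrightarrow> x \<le> y \<Longrightarrow> u' t y \<le> u' t x"
  using u'_decreasing[of x y] by (cases "x = y") auto

lemma u'_le_iff: "0 < x \<Longrightarrow> 0 < y \<Longrightarrow> u' t x \<le> u' t y \<longleftrightarrow> y \<le> x"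
  by (metis u'_decreasing u'_le not_le)

lemma u'_inv_into:
  assumes "v > 0"
  shows "inv_into {0<..} (u' t) v > 0" and "u' t (inv_into {0<..} (u' t) v) = v"
proof -
  have "v \<in> u' t ` {0<..}" using u'_bij assms by (simp add: bij_betw_def)
  then show "inv_into {0<..} (u' t) v > 0" "u' t (inv_into {0<..} (u' t) v) = v"
    using inv_into_into[of v "u' t" "{0<..}"] f_inv_into_f[of v "u' t" "{0<..}"] by auto
qed

lemma u'_continuous: "continuous_on {0<..} (u' t)"
proof (rule continuous_on_if_antimono_open_image)
  show "open (u' t ` {0<..})" using u'_bij by (simp add: bij_betw_def)
  show "\<And>x y. x \<in> {0<..} \<Longrightarrow> y \<in> {0<..} \<Longrightarrow> x \<le> y \<Longrightarrow> u' t y \<le> u' t x"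
    using u'_le by simp
qed

lemma u_le_tangent:
  assumes "x0 > 0" and "x \<ge> 0"
  shows "u t x \<le> u t x0 + u' t x0 * (x - x0)"
proof -
  have "convex_on {0..} (\<lambda>x. - u t x)"
    using convex_on_if_strict_convex_on u_concave unfolding strict_concave_on_def .
  moreover have "((\<lambda>x. - u t x) has_real_derivative - u' t x0) (at x0 within {0..})"
    using u_deriv[OF assms(1)] by (rule has_field_derivative_at_within[OF DERIV_minus])
  ultimately have "- u t x \<ge> - u t x0 + - u' t x0 * (x - x0)"
    using assms by (rule convex_on_Ici_above_tangent)
  then show ?thesis by simp
qed

text \<open>The boundary point 0 is not interior, so the tangent inequality for convex functions does not
  apply there; \<open>e' t 0 = 0\<close> and monotonicity take its place.\<close>
lemma e_ge_tangent:
  assumes "y0 \<ge> 0" and "y \<ge> 0"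
  shows "e t y \<ge> e t y0 + e' t y0 * (y - y0)"
proof (cases "y0 = 0")
  case True
  then show ?thesis using mono_onD[OF e_mono, of 0 y] assms(2) e'_zero by simp
next
  case False
  with assms(1) have "y0 > 0" by simp
  from convex_on_Ici_above_tangent[OF convex_on_if_strict_convex_on[OF e_convex]
      e_deriv[OF assms(1)] this assms(2)]
  show ?thesis .
qed

definition lagrangian :: "real \<Rightarrow> real \<Rightarrow> real \<Rightarrow> real" where
  "lagrangian l x z = ffun u e c p \<theta> \<beta> t x z - l * hfun d r t x z"

definition maximises_lagrangian :: "real \<Rightarrow> real \<Rightarrow> real \<Rightarrow> bool" where
  "maximises_lagrangian l x0 z0 \<longleftrightarrow> 0 \<le> z0 \<and> z0 \<le> x0 \<and> x0 \<le> 1 \<and>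
     (\<forall>x z. 0 \<le> z \<and> z \<le> x \<and> x \<le> 1 \<longrightarrow> lagrangian l x z \<le> lagrangian l x0 z0)"

definition z_price :: "real \<Rightarrow> real" where
  "z_price l = p t * c t + r t * l"

text \<open>The value of \<open>(x - z) * c t\<close> at which the marginal cost \<open>\<beta> t * c t * e' t ((x - z) * c t)\<close>
  balances \<open>z_price l\<close>; the paper's \<open>a_t(\<beta>_t, l)\<close> is this level divided by \<open>c t\<close>.\<close>
definition balanced_level :: "real \<Rightarrow> real" where
  "balanced_level l = inv_into {0..} (e' t) (z_price l / (\<beta> t * c t))"

text \<open>In the coordinates \<open>x\<close> and \<open>x - z\<close> the Lagrangian is a concave function of \<open>x\<close> plus a
  concave function of \<open>x - z\<close>, so it lies below its linearisation.\<close>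
lemma lagrangian_le_linearisation:
  assumes "x0 > 0" and "0 \<le> z0" "z0 \<le> x0" and "0 \<le> z" "z \<le> x"
  shows "lagrangian l x z \<le> lagrangian l x0 z0 + (\<theta> t * u' t x0 - X_fn c p d r t l) * (x - x0)
      + (z_price l - \<beta> t * c t * e' t ((x0 - z0) * c t)) * ((x - z) - (x0 - z0))"
proof -
  have "\<theta> t * u t x \<le> \<theta> t * (u t x0 + u' t x0 * (x - x0))"
    using u_le_tangent[of x0 x] assms \<theta>_pos by (simp add: mult_left_mono)
  moreover have "\<beta> t * e t ((x - z) * c t) \<ge> \<beta> t * (e t ((x0 - z0) * c t)
      + e' t ((x0 - z0) * c t) * ((x - z) * c t - (x0 - z0) * c t))"
    using e_ge_tangent[of "(x0 - z0) * c t" "(x - z) * c t"] assms c_pos \<beta>_pos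
    by (simp add: mult_left_mono)
  ultimately show ?thesis
    unfolding lagrangian_def ffun_def hfun_def X_fn_def z_price_def by (simp add: algebra_simps)
qed

lemma z_price_pos: "l \<ge> 0 \<Longrightarrow> z_price l > 0"
  unfolding z_price_def using p_pos c_pos r_nonneg by (simp add: add_pos_nonneg)

lemma X_fn_eq: "X_fn c p d r t l = z_price l + d t * l"
  unfolding X_fn_def z_price_def by (simp add: algebra_simps)

lemma X_fn_pos: "l \<ge> 0 \<Longrightarrow> X_fn c p d r t l > 0"
  unfolding X_fn_eq using z_price_pos d_nonneg by (simp add: add_pos_nonneg)

lemma balanced_level:
  assumes "l \<ge> 0"
  shows balanced_level_pos: "balanced_level l > 0"
    and balanced_level_balances: "\<beta> t * c t * e' t (balanced_level l) = z_price l"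
proof -
  have v: "z_price l / (\<beta> t * c t) > 0" using z_price_pos[OF assms] \<beta>_pos c_pos by simp
  then have "z_price l / (\<beta> t * c t) \<in> e' t ` {0..}" using e'_bij by (simp add: bij_betw_def)
  then have ge: "balanced_level l \<ge> 0" and eq: "e' t (balanced_level l) = z_price l / (\<beta> t * c t)"
    unfolding balanced_level_def
    using inv_into_into[of _ "e' t" "{0..}"] f_inv_into_f[of _ "e' t" "{0..}"] by auto
  show "\<beta> t * c t * e' t (balanced_level l) = z_price l" using eq \<beta>_pos c_pos by simp
  show "balanced_level l > 0"
  proof (rule ccontr)
    assume "\<not> balanced_level l > 0"
    with ge e'_zero have "e' t (balanced_level l) = 0" by simp
    with eq v show False by linarith
  qed
qed

lemma a_fn_mult_c: "a_fn e' c p r t (\<beta> t) l * c t = balanced_level l"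
  unfolding a_fn_def balanced_level_def z_price_def using c_pos by simp

lemma a_fn_pos:
  assumes "l \<ge> 0"
  shows "a_fn e' c p r t (\<beta> t) l > 0"
proof -
  have "0 < a_fn e' c p r t (\<beta> t) l * c t"
    using a_fn_mult_c balanced_level_pos[OF assms] by simp
  with c_pos show ?thesis by (simp add: zero_less_mult_iff)
qed

lemma a_fn_le_one_iff:
  assumes "l \<ge> 0"
  shows "a_fn e' c p r t (\<beta> t) l \<le> 1 \<longleftrightarrow> z_price l / (c t * e' t (c t)) \<le> \<beta> t"
proof -
  have "a_fn e' c p r t (\<beta> t) l \<le> 1 \<longleftrightarrow> balanced_level l \<le> c t"
    unfolding a_fn_mult_c[symmetric] using c_pos by (simp add: mult_le_cancel_right2)
  also have "\<dots> \<longleftrightarrow> e' t (balanced_level l) \<le> e' t (c t)"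
    using e'_le_iff balanced_level_pos[OF assms] c_pos by simp
  also have "\<dots> \<longleftrightarrow> \<beta> t * c t * e' t (balanced_level l) \<le> \<beta> t * c t * e' t (c t)"
    using \<beta>_pos c_pos by simp
  also have "\<dots> \<longleftrightarrow> z_price l \<le> \<beta> t * c t * e' t (c t)"
    using balanced_level_balances[OF assms] by simp
  also have "\<dots> \<longleftrightarrow> z_price l / (c t * e' t (c t)) \<le> \<beta> t"
    using c_pos e'_c_pos by (simp add: divide_le_eq mult.commute mult.left_commute)
  finally show ?thesis .
qed

lemma maximises_lagrangian_OmegaI:
  assumes l: "l \<ge> 0" and O: "OmegaI u' e' c p d r t l (\<beta> t) (\<theta> t)"
  shows "maximises_lagrangian l 1 0"
  unfolding maximises_lagrangian_def
proof (intro conjI allI impI)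
  fix x z :: real assume xz: "0 \<le> z \<and> z \<le> x \<and> x \<le> 1"
  define A where "A = \<theta> t * u' t 1 - X_fn c p d r t l"
  define B where "B = z_price l - \<beta> t * c t * e' t (c t)"
  have "\<theta> t * u' t 1 > \<beta> t * c t * e' t (c t) + d t * l"
    using O u'_pos[of 1] unfolding OmegaI_def by (simp add: pos_divide_less_eq mult.commute)
  then have AB: "A + B > 0" unfolding A_def B_def X_fn_eq by simp
  have "\<beta> t * c t * e' t (c t) < z_price l"
    using O c_pos e'_c_pos unfolding OmegaI_def z_price_def
    by (simp add: less_divide_eq mult.commute mult.left_commute)
  then have B: "B > 0" unfolding B_def by simp
  have "lagrangian l x z \<le> lagrangian l 1 0 + (A * (x - 1) + B * ((x - z) - 1))"
    using lagrangian_le_linearisation[of 1 0 z x l] xz unfolding A_def B_def by simp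
  also have "A * (x - 1) + B * ((x - z) - 1) = (A + B) * (x - 1) - B * z"
    by (simp add: algebra_simps)
  also have "\<dots> \<le> 0"
  proof -
    have "(A + B) * (x - 1) \<le> 0" using AB xz by (simp add: mult_nonneg_nonpos)
    moreover have "B * z \<ge> 0" using B xz by simp
    ultimately show ?thesis by linarith
  qed
  finally show "lagrangian l x z \<le> lagrangian l 1 0" by simp
qed auto

lemma maximises_lagrangian_OmegaII:
  assumes l: "l \<ge> 0" and O: "OmegaII u' e' c p d r t l (\<beta> t) (\<theta> t)"
  shows "maximises_lagrangian l 1 (1 - a_fn e' c p r t (\<beta> t) l)"
proof -
  define a where "a = a_fn e' c p r t (\<beta> t) l"
  have a0: "a > 0" unfolding a_def using a_fn_pos[OF l] .
  have a1: "a \<le> 1" unfolding a_def a_fn_le_one_iff[OF l] using O unfolding OmegaII_def z_price_def by simp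
  have A: "\<theta> t * u' t 1 > X_fn c p d r t l"
    using O u'_pos[of 1] unfolding OmegaII_def by (simp add: pos_divide_less_eq)
  show ?thesis unfolding a_def[symmetric] maximises_lagrangian_def
  proof (intro conjI allI impI)
    fix x z :: real assume xz: "0 \<le> z \<and> z \<le> x \<and> x \<le> 1"
    have "(1 - (1 - a)) * c t = balanced_level l" using a_fn_mult_c[of l] unfolding a_def by simp
    then have "lagrangian l x z \<le> lagrangian l 1 (1 - a) + (\<theta> t * u' t 1 - X_fn c p d r t l) * (x - 1)"
      using lagrangian_le_linearisation[of 1 "1 - a" z x l] xz a0 a1 balanced_level_balances[OF l]
      by simp
    also have "\<dots> \<le> lagrangian l 1 (1 - a)"
      using A xz by (simp add: mult_nonneg_nonpos)
    finally show "lagrangian l x z \<le> lagrangian l 1 (1 - a)" .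
  qed (use a0 a1 in auto)
qed

lemma maximises_lagrangian_OmegaIII:
  assumes l: "l \<ge> 0" and O: "OmegaIII u' e' c p d r t l (\<beta> t) (\<theta> t)"
  shows "maximises_lagrangian l (inv_into {0<..} (u' t) (X_fn c p d r t l / \<theta> t))
      (inv_into {0<..} (u' t) (X_fn c p d r t l / \<theta> t) - a_fn e' c p r t (\<beta> t) l)"
proof -
  define a where "a = a_fn e' c p r t (\<beta> t) l"
  define X where "X = X_fn c p d r t l"
  define x0 where "x0 = inv_into {0<..} (u' t) (X / \<theta> t)"
  have "X / \<theta> t > 0" unfolding X_def using X_fn_pos[OF l] \<theta>_pos by simp
  then have x0: "x0 > 0" "u' t x0 = X / \<theta> t" unfolding x0_def using u'_inv_into by auto
  have a0: "a > 0" unfolding a_def using a_fn_pos[OF l] .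
  have "X / \<theta> t \<le> u' t a"
    using O u'_pos[OF a0] \<theta>_pos unfolding OmegaIII_def X_def a_def by (simp add: divide_le_eq mult.commute)
  then have ax: "a \<le> x0" using u'_le_iff[OF x0(1) a0] x0 by simp
  have "u' t 1 \<le> X / \<theta> t"
    using O u'_pos[of 1] \<theta>_pos unfolding OmegaIII_def X_def by (simp add: le_divide_eq mult.commute)
  then have x1: "x0 \<le> 1" using u'_le_iff[OF _ x0(1), of 1] x0 by simp
  show ?thesis unfolding a_def[symmetric] X_def[symmetric] x0_def[symmetric] maximises_lagrangian_def
  proof (intro conjI allI impI)
    fix x z :: real assume xz: "0 \<le> z \<and> z \<le> x \<and> x \<le> 1"
    have "(x0 - (x0 - a)) * c t = balanced_level l" using a_fn_mult_c[of l] unfolding a_def by simp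
    then show "lagrangian l x z \<le> lagrangian l x0 (x0 - a)"
      using lagrangian_le_linearisation[of x0 "x0 - a" z x l] xz a0 ax x0 \<theta>_pos
        balanced_level_balances[OF l] unfolding X_def by simp
  qed (use a0 ax x1 in auto)
qed

definition foc :: "real \<Rightarrow> real" where
  "foc x = \<theta> t * u' t x - \<beta> t * c t * e' t (x * c t)"

lemma foc_strict_antimono:
  assumes "0 < x" "x < y"
  shows "foc y < foc x"
proof -
  have "\<theta> t * u' t y < \<theta> t * u' t x" using u'_decreasing[OF assms] \<theta>_pos by simp
  moreover have "e' t (x * c t) < e' t (y * c t)" using e'_less assms c_pos by simp
  then have "\<beta> t * c t * e' t (x * c t) < \<beta> t * c t * e' t (y * c t)" using \<beta>_pos c_pos by simp
  ultimately show ?thesis unfolding foc_def by simp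
qed

lemma foc_inj:
  assumes "0 < x" "0 < y" "foc x = foc y"
  shows "x = y"
proof (cases x y rule: linorder_cases)
  case less
  with foc_strict_antimono[OF assms(1) less] assms(3) show ?thesis by simp
next
  case greater
  with foc_strict_antimono[OF assms(2) greater] assms(3) show ?thesis by simp
qed

lemma foc_continuous: "continuous_on {0<..} foc"
proof -
  have "(\<lambda>x. x * c t) ` {0<..} \<subseteq> {0..}" using c_pos by auto
  then have "continuous_on {0<..} (\<lambda>x. e' t (x * c t))"
    by (rule continuous_on_compose2[OF e'_cont continuous_on_mult_right[OF continuous_on_id]])
  then show ?thesis unfolding foc_def by (intro continuous_intros u'_continuous)
qed

lemma foc_root_exists:
  assumes l: "l \<ge> 0" and O: "\<theta> t * u' t 1 \<le> \<beta> t * c t * e' t (c t) + d t * l"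
  obtains x where "0 < x" "x \<le> 1" "foc x = d t * l"
proof -
  \<comment> \<open>\<open>x1\<close> is chosen with \<open>foc x1 > d t * l\<close>; the root then lies in \<open>[x1, 1]\<close> by the IVT.\<close>
  define v where "v = (\<beta> t * c t * e' t (c t) + d t * l + 1) / \<theta> t"
  have "\<beta> t * c t * e' t (c t) > 0" using \<beta>_pos c_pos e'_c_pos by simp
  moreover have "d t * l \<ge> 0" using d_nonneg l by simp
  ultimately have "v > 0" unfolding v_def using \<theta>_pos by simp
  define x1 where "x1 = inv_into {0<..} (u' t) v"
  have x1: "x1 > 0" "\<theta> t * u' t x1 = \<beta> t * c t * e' t (c t) + d t * l + 1"
    unfolding x1_def using u'_inv_into[OF \<open>v > 0\<close>] \<theta>_pos by (auto simp: v_def)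
  have "x1 < 1"
  proof (rule ccontr)
    assume "\<not> x1 < 1"
    then have "\<theta> t * u' t x1 \<le> \<theta> t * u' t 1" using u'_le[of 1 x1] \<theta>_pos by simp
    with O x1 show False by simp
  qed
  have "e' t (x1 * c t) \<le> e' t (c t)" using e'_le x1 \<open>x1 < 1\<close> c_pos by simp
  then have "\<beta> t * c t * e' t (x1 * c t) \<le> \<beta> t * c t * e' t (c t)" using \<beta>_pos c_pos by simp
  then have "d t * l \<le> foc x1" unfolding foc_def using x1 by simp
  moreover have "foc 1 \<le> d t * l" unfolding foc_def using O by simp
  moreover have "\<forall>x. x1 \<le> x \<and> x \<le> 1 \<longrightarrow> isCont foc x"
    using foc_continuous x1(1) by (auto simp: continuous_on_eq_continuous_at)
  ultimately obtain x where x: "x1 \<le> x" "x \<le> 1" "foc x = d t * l"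
    using IVT2[of foc 1 "d t * l" x1] \<open>x1 < 1\<close> by auto
  show ?thesis by (rule that[of x]) (use x x1(1) in auto)
qed

lemma foc_root_le_a_fn:
  assumes l: "l \<ge> 0" and O: "\<theta> t < X_fn c p d r t l / u' t (a_fn e' c p r t (\<beta> t) l)"
    and x: "0 < x" "foc x = d t * l"
  shows "x \<le> a_fn e' c p r t (\<beta> t) l"
proof (rule ccontr)
  define a where "a = a_fn e' c p r t (\<beta> t) l"
  assume "\<not> x \<le> a_fn e' c p r t (\<beta> t) l"
  then have ax: "a < x" unfolding a_def by simp
  have a0: "a > 0" unfolding a_def using a_fn_pos[OF l] .
  have "balanced_level l < x * c t"
    using mult_strict_right_mono[OF ax c_pos] a_fn_mult_c[of l] unfolding a_def by simp
  then have "e' t (balanced_level l) < e' t (x * c t)" using e'_less balanced_level_pos[OF l] by simp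
  then have "\<beta> t * c t * e' t (balanced_level l) < \<beta> t * c t * e' t (x * c t)"
    using \<beta>_pos c_pos by simp
  then have "z_price l < \<beta> t * c t * e' t (x * c t)"
    using balanced_level_balances[OF l] by simp
  then have "X_fn c p d r t l < \<theta> t * u' t x" using x(2) unfolding foc_def X_fn_eq by simp
  also have "\<dots> < \<theta> t * u' t a" using u'_decreasing[OF a0 ax] \<theta>_pos by simp
  finally have "X_fn c p d r t l / u' t a < \<theta> t" using u'_pos[OF a0] by (simp add: divide_less_eq mult.commute)
  with O show False unfolding a_def by simp
qed

lemma THE_foc_root:
  assumes "0 < x0" "x0 \<le> 1" "foc x0 = d t * l"
  shows "(THE x. 0 < x \<and> x \<le> 1 \<and> \<theta> t * u' t x - \<beta> t * c t * e' t (x * c t) = d t * l) = x0"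
proof (rule the_equality)
  show "0 < x0 \<and> x0 \<le> 1 \<and> \<theta> t * u' t x0 - \<beta> t * c t * e' t (x0 * c t) = d t * l"
    using assms unfolding foc_def by simp
  fix y assume y: "0 < y \<and> y \<le> 1 \<and> \<theta> t * u' t y - \<beta> t * c t * e' t (y * c t) = d t * l"
  then have "foc y = foc x0" using assms(3) unfolding foc_def by simp
  with y assms(1) show "y = x0" using foc_inj by blast
qed

lemma maximises_lagrangian_OmegaIV:
  assumes l: "l \<ge> 0" and O: "OmegaIV u' e' c p d r t l (\<beta> t) (\<theta> t)"
  shows "maximises_lagrangian l
    (THE x. 0 < x \<and> x \<le> 1 \<and> \<theta> t * u' t x - \<beta> t * c t * e' t (x * c t) = d t * l) 0"
proof -
  have "\<theta> t * u' t 1 \<le> \<beta> t * c t * e' t (c t) + d t * l"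
    using O u'_pos[of 1] unfolding OmegaIV_def by (simp add: le_divide_eq)
  then obtain x0 where x0: "0 < x0" "x0 \<le> 1" "foc x0 = d t * l" using foc_root_exists[OF l] by blast
  have "x0 \<le> a_fn e' c p r t (\<beta> t) l"
    using foc_root_le_a_fn[OF l _ x0(1,3)] O unfolding OmegaIV_def by simp
  then have "x0 * c t \<le> balanced_level l"
    using mult_right_mono[OF _ less_imp_le[OF c_pos]] a_fn_mult_c[of l] by metis
  then have "e' t (x0 * c t) \<le> e' t (balanced_level l)" using e'_le x0(1) c_pos by simp
  then have cost_le: "\<beta> t * c t * e' t (x0 * c t) \<le> \<beta> t * c t * e' t (balanced_level l)"
    using \<beta>_pos c_pos by simp
  define M where "M = z_price l - \<beta> t * c t * e' t (x0 * c t)"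
  have M: "M \<ge> 0" unfolding M_def using cost_le balanced_level_balances[OF l] by simp
  show ?thesis unfolding THE_foc_root[OF x0] maximises_lagrangian_def
  proof (intro conjI allI impI)
    fix x z :: real assume xz: "0 \<le> z \<and> z \<le> x \<and> x \<le> 1"
    have "lagrangian l x z \<le> lagrangian l x0 0 + (- M * (x - x0) + M * ((x - z) - x0))"
      using lagrangian_le_linearisation[of x0 0 z x l] xz x0 unfolding foc_def X_fn_eq M_def
      by (simp add: algebra_simps)
    also have "- M * (x - x0) + M * ((x - z) - x0) = - (M * z)" by (simp add: algebra_simps)
    also have "\<dots> \<le> 0" using mult_nonneg_nonneg[OF M, of z] xz by simp
    finally show "lagrangian l x z \<le> lagrangian l x0 0" by simp
  qed (use x0 in auto)
qed

lemma Omega_cases: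
  assumes l: "l \<ge> 0"
  shows "OmegaI u' e' c p d r t l (\<beta> t) (\<theta> t) \<or> OmegaII u' e' c p d r t l (\<beta> t) (\<theta> t)
    \<or> OmegaIII u' e' c p d r t l (\<beta> t) (\<theta> t) \<or> OmegaIV u' e' c p d r t l (\<beta> t) (\<theta> t)"
proof -
  define a where "a = a_fn e' c p r t (\<beta> t) l"
  define X where "X = X_fn c p d r t l"
  define \<tau> where "\<tau> = (\<beta> t * c t * e' t (c t) + d t * l) / u' t 1"
  have a0: "a > 0" unfolding a_def using a_fn_pos[OF l] .
  have X: "X > 0" unfolding X_def using X_fn_pos[OF l] .
  have u1: "u' t 1 > 0" and ua: "u' t a > 0" using u'_pos a0 by auto
  have "\<tau> < X / u' t 1 \<longleftrightarrow> \<beta> t * c t * e' t (c t) < z_price l"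
    unfolding \<tau>_def X_def X_fn_eq using u1 by (simp add: divide_less_cancel)
  also have "\<dots> \<longleftrightarrow> \<beta> t < z_price l / (c t * e' t (c t))"
    using c_pos e'_c_pos by (simp add: less_divide_eq mult.commute mult.left_commute)
  finally have \<tau>_iff: "\<tau> < X / u' t 1 \<longleftrightarrow> \<beta> t < z_price l / (c t * e' t (c t))" .
  show ?thesis
  proof (cases "a \<le> 1")
    case True
    then have "\<not> \<tau> < X / u' t 1" using \<tau>_iff a_fn_le_one_iff[OF l] unfolding a_def by simp
    moreover have "X / u' t a \<le> X / u' t 1"
      using u'_le[OF a0 True] X u1 ua by (simp add: divide_left_mono)
    ultimately show ?thesis
      using True a_fn_le_one_iff[OF l] \<beta>_pos
      unfolding OmegaI_def OmegaII_def OmegaIII_def OmegaIV_def a_def X_def \<tau>_def z_price_def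
      by auto
  next
    case False
    then have "\<tau> < X / u' t 1" using \<tau>_iff a_fn_le_one_iff[OF l] unfolding a_def by simp
    moreover have "X / u' t 1 < X / u' t a"
      using u'_decreasing[of 1 a] False X u1 ua by (simp add: divide_strict_left_mono)
    ultimately show ?thesis
      using False a_fn_le_one_iff[OF l] \<beta>_pos
      unfolding OmegaI_def OmegaIV_def a_def X_def \<tau>_def z_price_def
      by auto
  qed
qed

lemma W_fn_maximises_lagrangian:
  assumes "l \<ge> 0"
  shows "maximises_lagrangian l (fst (W_fn u' e' c p d r \<theta> \<beta> t l)) (snd (W_fn u' e' c p d r \<theta> \<beta> t l))"
  using Omega_cases[OF assms] maximises_lagrangian_OmegaI[OF assms] maximises_lagrangian_OmegaII[OF assms]
    maximises_lagrangian_OmegaIII[OF assms] maximises_lagrangian_OmegaIV[OF assms]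
  unfolding W_fn_def by auto

end

lemma proj_in_range: "0 \<le> fee \<Longrightarrow> 0 \<le> proj fee v \<and> proj fee v \<le> fee"
  unfolding proj_def by auto

lemma proj_dist_le: "0 \<le> lam \<Longrightarrow> lam \<le> fee \<Longrightarrow> \<bar>proj fee v - lam\<bar> \<le> \<bar>v - lam\<bar>"
  unfolding proj_def by (auto simp: abs_if max_def min_def)

lemma projected_step_regret:
  fixes lam fee L g \<eta> :: real
  assumes "0 \<le> lam" "lam \<le> fee" and "\<eta> > 0"
  shows "(lam - L) * g \<le> ((L - lam)\<^sup>2 - (proj fee (L + \<eta> * g) - lam)\<^sup>2) / (2 * \<eta>) + \<eta> * g\<^sup>2 / 2"
proof -
  define b where "b = proj fee (L + \<eta> * g) - lam"
  have "\<bar>b\<bar> \<le> \<bar>(L - lam) + \<eta> * g\<bar>"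
    using proj_dist_le[OF assms(1,2)] unfolding b_def by (simp add: algebra_simps)
  then have "b\<^sup>2 \<le> ((L - lam) + \<eta> * g)\<^sup>2" by (simp add: abs_le_square_iff)
  then have "2 * \<eta> * ((lam - L) * g) \<le> (L - lam)\<^sup>2 - b\<^sup>2 + \<eta>\<^sup>2 * g\<^sup>2"
    by (simp add: power2_eq_square algebra_simps)
  then show ?thesis
    using assms(3) unfolding b_def by (simp add: field_simps power2_eq_square)
qed

lemma sum_telescope_divide_le:
  fixes a \<eta> :: "nat \<Rightarrow> real"
  assumes a: "\<And>k. 0 \<le> a k \<and> a k \<le> B"
    and \<eta>_pos: "\<And>k. 1 \<le> k \<Longrightarrow> k \<le> T \<Longrightarrow> \<eta> k > 0"
    and \<eta>_antimono: "\<And>k. 1 \<le> k \<Longrightarrow> k < T \<Longrightarrow> \<eta> (Suc k) \<le> \<eta> k"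
  shows "1 \<le> n \<Longrightarrow> n \<le> T \<Longrightarrow> (\<Sum>k=1..n. (a (k - 1) - a k) / \<eta> k) \<le> (B - a n) / \<eta> n"
proof (induction n rule: nat_induct_at_least)
  case base
  then show ?case using a[of 0] \<eta>_pos[of 1] by (simp add: divide_right_mono)
next
  case (Suc n)
  have "(B - a n) / \<eta> n \<le> (B - a n) / \<eta> (Suc n)"
    using a[of n] \<eta>_pos \<eta>_antimono[of n] Suc by (intro divide_left_mono) auto
  with Suc have "(\<Sum>k=1..Suc n. (a (k - 1) - a k) / \<eta> k)
      \<le> (B - a n) / \<eta> (Suc n) + (a n - a (Suc n)) / \<eta> (Suc n)"
    by simp
  also have "\<dots> = (B - a (Suc n)) / \<eta> (Suc n)" by (simp add: diff_divide_distrib)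
  finally show ?case .
qed

lemma projected_gradient_regret:
  fixes L g \<eta> :: "nat \<Rightarrow> real"
  assumes T: "T \<ge> 1"
    and range: "\<And>k. 0 \<le> L k \<and> L k \<le> fee"
    and step: "\<And>t. t \<in> {1..T} \<Longrightarrow> L t = proj fee (L (t - 1) + \<eta> t * g t)"
    and bound: "\<And>t. t \<in> {1..T} \<Longrightarrow> \<bar>g t\<bar> \<le> G"
    and \<eta>_pos: "\<And>t. t \<in> {1..T} \<Longrightarrow> \<eta> t > 0"
    and \<eta>_antimono: "\<And>s t. s \<in> {1..T} \<Longrightarrow> t \<in> {1..T} \<Longrightarrow> s \<le> t \<Longrightarrow> \<eta> t \<le> \<eta> s"
    and lam: "0 \<le> lam" "lam \<le> fee"
  shows "(\<Sum>t=1..T. (lam - L (t - 1)) * g t) \<le> fee\<^sup>2 / 2 * (1 / \<eta> T) + G\<^sup>2 / 2 * (\<Sum>t=1..T. \<eta> t)"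
proof -
  have "(\<Sum>t=1..T. (lam - L (t - 1)) * g t)
      \<le> (\<Sum>t=1..T. ((L (t - 1) - lam)\<^sup>2 - (L t - lam)\<^sup>2) / (2 * \<eta> t) + \<eta> t * G\<^sup>2 / 2)"
  proof (rule sum_mono)
    fix t assume t: "t \<in> {1..T}"
    have "(g t)\<^sup>2 \<le> G\<^sup>2" using bound[OF t] abs_le_square_iff[of "g t" G] by simp
    then have "\<eta> t * (g t)\<^sup>2 / 2 \<le> \<eta> t * G\<^sup>2 / 2" using \<eta>_pos[OF t] by simp
    then show "(lam - L (t - 1)) * g t
        \<le> ((L (t - 1) - lam)\<^sup>2 - (L t - lam)\<^sup>2) / (2 * \<eta> t) + \<eta> t * G\<^sup>2 / 2"
      using projected_step_regret[OF lam \<eta>_pos[OF t], of "L (t - 1)" "g t"] step[OF t] by simp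
  qed
  also have "\<dots> = (\<Sum>t=1..T. ((L (t - 1) - lam)\<^sup>2 - (L t - lam)\<^sup>2) / (2 * \<eta> t))
      + G\<^sup>2 / 2 * (\<Sum>t=1..T. \<eta> t)"
    by (simp add: sum.distrib sum_distrib_left mult.commute)
  also have "(\<Sum>t=1..T. ((L (t - 1) - lam)\<^sup>2 - (L t - lam)\<^sup>2) / (2 * \<eta> t))
      \<le> (fee\<^sup>2 - (L T - lam)\<^sup>2) / (2 * \<eta> T)"
  proof (rule sum_telescope_divide_le[where T = T])
    show "0 \<le> (L k - lam)\<^sup>2 \<and> (L k - lam)\<^sup>2 \<le> fee\<^sup>2" for k
      using range[of k] lam abs_le_square_iff[of "L k - lam" fee] by auto
  qed (use T \<eta>_pos \<eta>_antimono in auto)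
  also have "(fee\<^sup>2 - (L T - lam)\<^sup>2) / (2 * \<eta> T) \<le> fee\<^sup>2 / 2 * (1 / \<eta> T)"
    using \<eta>_pos[of T] T by (simp add: divide_right_mono)
  finally show ?thesis by simp
qed

lemma summation_by_parts:
  fixes L m :: "nat \<Rightarrow> real"
  shows "(\<Sum>t=1..n. L (t - 1) * m t)
    = L n * (\<Sum>i=1..n. m i) - (\<Sum>t=1..n. (L t - L (t - 1)) * (\<Sum>i=1..t. m i))"
  by (induction n) (simp_all add: algebra_simps)

lemma slowly_varying_weights_sum_ge:
  fixes L l \<eta> :: "nat \<Rightarrow> real" and T :: nat
  defines "lbar \<equiv> (\<Sum>t=1..T. l t) / real T"
  assumes T: "T \<ge> 1"
    and L_step: "\<And>t. t \<in> {1..T} \<Longrightarrow> \<bar>L t - L (t - 1)\<bar> \<le> \<eta> t * G"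
    and deviation: "\<And>t. t \<in> {1..T} \<Longrightarrow> \<bar>real t * lbar - (\<Sum>i=1..t. l i)\<bar> \<le> P"
  shows "(\<Sum>t=1..T. L (t - 1) * (l t - lbar)) \<ge> - (G * P * (\<Sum>t=1..T. \<eta> t))"
proof -
  define D where "D n = (\<Sum>i=1..n. l i - lbar)" for n
  have D_eq: "D n = (\<Sum>i=1..n. l i) - real n * lbar" for n
    unfolding D_def by (simp add: sum_subtractf)
  have "(\<Sum>t=1..T. (L t - L (t - 1)) * D t) \<le> (\<Sum>t=1..T. \<eta> t * G * P)"
  proof (rule sum_mono)
    fix t assume t: "t \<in> {1..T}"
    have "(L t - L (t - 1)) * D t \<le> \<bar>L t - L (t - 1)\<bar> * \<bar>D t\<bar>"
      by (simp add: abs_mult[symmetric])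
    also have "\<dots> \<le> (\<eta> t * G) * P"
      using L_step[OF t] deviation[OF t] unfolding D_eq
      by (intro mult_mono) (auto simp: abs_minus_commute)
    finally show "(L t - L (t - 1)) * D t \<le> \<eta> t * G * P" .
  qed
  moreover have "D T = 0" unfolding D_eq lbar_def using T by simp
  then have "(\<Sum>t=1..T. L (t - 1) * (l t - lbar)) = - (\<Sum>t=1..T. (L t - L (t - 1)) * D t)"
    using summation_by_parts[of L "\<lambda>t. l t - lbar" T] unfolding D_def by simp
  ultimately show ?thesis
    by (simp add: sum_distrib_left sum_distrib_right mult.commute mult.left_commute)
qed

lemma bounded_weights_mean_ge:
  fixes L l :: "nat \<Rightarrow> real"
  assumes T: "T \<ge> 1" and range: "\<And>k. 0 \<le> L k \<and> L k \<le> fee"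
  shows "(\<Sum>t=1..T. L (t - 1) * ((\<Sum>t=1..T. l t) / real T)) \<ge> - fee * max 0 (- (\<Sum>t=1..T. l t))"
proof (cases "(\<Sum>t=1..T. l t) \<ge> 0")
  case True
  then have "(\<Sum>t=1..T. L (t - 1) * ((\<Sum>t=1..T. l t) / real T)) \<ge> 0"
    using range by (intro sum_nonneg) simp
  with True show ?thesis by simp
next
  case False
  then have "(\<Sum>t=1..T. L (t - 1) * ((\<Sum>t=1..T. l t) / real T))
      \<ge> (\<Sum>t=1..T. fee * ((\<Sum>t=1..T. l t) / real T))"
    using range by (intro sum_mono mult_right_mono_neg) (auto simp: divide_nonpos_nonneg)
  also have "(\<Sum>t=1..T. fee * ((\<Sum>t=1..T. l t) / real T)) = fee * (\<Sum>t=1..T. l t)"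
    using T by simp
  finally show ?thesis using False by simp
qed

lemma penalised_gap_le:
  fixes fs fh g l L :: "nat \<Rightarrow> real" and T :: nat
  defines "lbar \<equiv> (\<Sum>t=1..T. l t) / real T"
  assumes T: "T \<ge> 1" and range: "\<And>k. 0 \<le> L k \<and> L k \<le> fee"
    and lagrangian: "\<And>t. t \<in> {1..T} \<Longrightarrow> fs t + L (t - 1) * l t \<le> fh t - L (t - 1) * g t"
    and regret: "\<And>lam. 0 \<le> lam \<Longrightarrow> lam \<le> fee \<Longrightarrow> (\<Sum>t=1..T. (lam - L (t - 1)) * g t) \<le> R1"
    and fluctuation: "(\<Sum>t=1..T. L (t - 1) * (l t - lbar)) \<ge> - R2"
  shows "((\<Sum>t=1..T. fs t) - fee * max 0 (- (\<Sum>t=1..T. l t)))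
      - ((\<Sum>t=1..T. fh t) - fee * max 0 (\<Sum>t=1..T. g t)) \<le> R1 + R2"
proof -
  \<comment> \<open>The penalty term is the payoff of this fixed price against the excesses \<open>g\<close>.\<close>
  define lam where "lam = (if (\<Sum>t=1..T. g t) \<ge> 0 then fee else 0)"
  have "fee \<ge> 0" using range[of 0] by simp
  then have "(\<Sum>t=1..T. (lam - L (t - 1)) * g t) \<le> R1" unfolding lam_def by (intro regret) auto
  moreover have "(\<Sum>t=1..T. (lam - L (t - 1)) * g t)
      = fee * max 0 (\<Sum>t=1..T. g t) - (\<Sum>t=1..T. L (t - 1) * g t)"
    unfolding lam_def left_diff_distrib sum_subtractf sum_distrib_left[symmetric] by auto
  moreover have "(\<Sum>t=1..T. fs t) + (\<Sum>t=1..T. L (t - 1) * l t)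
      \<le> (\<Sum>t=1..T. fh t) - (\<Sum>t=1..T. L (t - 1) * g t)"
    using sum_mono[of "{1..T}" "\<lambda>t. fs t + L (t - 1) * l t" "\<lambda>t. fh t - L (t - 1) * g t"] lagrangian
    by (simp add: sum.distrib sum_subtractf)
  moreover have "(\<Sum>t=1..T. L (t - 1) * l t)
      = (\<Sum>t=1..T. L (t - 1) * lbar) + (\<Sum>t=1..T. L (t - 1) * (l t - lbar))"
    by (simp add: sum.distrib[symmetric] algebra_simps)
  moreover have "(\<Sum>t=1..T. L (t - 1) * lbar) \<ge> - fee * max 0 (- (\<Sum>t=1..T. l t))"
    unfolding lbar_def using bounded_weights_mean_ge[OF T range] .
  ultimately show ?thesis using fluctuation by linarith
qed

lemma lam_seq_in_range:
  "0 \<le> fee \<Longrightarrow> 0 \<le> lam_seq T Q fee u' e' c p d r \<theta> \<beta> \<eta> n \<and> lam_seq T Q fee u' e' c p d r \<theta> \<beta> \<eta> n \<le> fee"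
  by (cases n) (simp_all add: Let_def proj_in_range)

lemma lam_seq_step:
  assumes "t \<ge> 1"
  shows "lam_seq T Q fee u' e' c p d r \<theta> \<beta> \<eta> t
    = proj fee (lam_seq T Q fee u' e' c p d r \<theta> \<beta> \<eta> (t - 1) + \<eta> t *
        (hfun d r t (fst (online_dec T Q fee u' e' c p d r \<theta> \<beta> \<eta> t))
           (snd (online_dec T Q fee u' e' c p d r \<theta> \<beta> \<eta> t)) - Q / real T))"
  using assms by (cases t) (simp_all add: online_dec_def Let_def)

lemma hfun_deviation_le_Xi:
  assumes "0 \<le> d t" "d t \<le> dbar" "0 \<le> r t" "r t \<le> rbar" and "0 \<le> z" "z \<le> x" "x \<le> 1"
  shows "\<bar>hfun d r t x z - Q / real T\<bar> \<le> Xi T Q dbar rbar"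
proof -
  have "d t * x \<le> dbar" using assms mult_mono[of "d t" dbar x 1] by simp
  moreover have "r t * z \<le> rbar" using assms mult_mono[of "r t" rbar z 1] by simp
  moreover have "0 \<le> hfun d r t x z" unfolding hfun_def using assms by simp
  moreover have "dbar + rbar - Q / real T \<le> \<bar>Q / real T - dbar - rbar\<bar>" by simp
  ultimately show ?thesis unfolding hfun_def Xi_def abs_le_iff le_max_iff_disj by linarith
qed

lemma Psi_ge:
  fixes d r xs zs :: "nat \<Rightarrow> real" and Q :: real and T :: nat
  defines "l \<equiv> \<lambda>t. Q / real T - hfun d r t (xs t) (zs t)"
  assumes "t \<in> {1..T}"
  shows "\<bar>real t * ((\<Sum>t=1..T. l t) / real T) - (\<Sum>i=1..t. l i)\<bar> \<le> Psi T Q d r xs zs"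
  unfolding Psi_def Let_def l_def using assms by (intro Max_ge) auto

lemma constant_step_size_bound:
  fixes fee X P :: real and T :: nat
  assumes "T \<ge> 1" "fee > 0" "X > 0"
  shows "(1 / real T) * (fee\<^sup>2 / 2 * (1 / (fee / (X * sqrt (real T))))
      + (X\<^sup>2 / 2 + X * P) * (\<Sum>t=1..T. fee / (X * sqrt (real T)))) = fee * (X + P) / sqrt (real T)"
proof -
  have "real T = sqrt (real T) * sqrt (real T)" by simp
  moreover have "sqrt (real T) > 0" using assms(1) by simp
  ultimately show ?thesis using assms(2,3) by (simp add: field_simps power2_eq_square)
qed

locale online_run =
  fixes T :: nat and Q fee dbar rbar :: real and u e u' e' :: "nat \<Rightarrow> real \<Rightarrow> real"
    and c p \<theta> \<beta> d r \<eta> :: "nat \<Rightarrow> real"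
  assumes T: "T \<ge> 1" and fee: "fee > 0"
    and d_bounds: "\<And>t. t \<in> {1..T} \<Longrightarrow> 0 \<le> d t \<and> d t \<le> dbar"
    and r_bounds: "\<And>t. t \<in> {1..T} \<Longrightarrow> 0 \<le> r t \<and> r t \<le> rbar"
    and period: "\<And>t. t \<in> {1..T} \<Longrightarrow> lagrangian_period u e u' e' c p \<theta> \<beta> d r t"
    and \<eta>_pos: "\<And>t. t \<in> {1..T} \<Longrightarrow> \<eta> t > 0"
    and \<eta>_antimono: "\<And>s t. s \<in> {1..T} \<Longrightarrow> t \<in> {1..T} \<Longrightarrow> s \<le> t \<Longrightarrow> \<eta> t \<le> \<eta> s"
begin

definition price :: "nat \<Rightarrow> real" where
  "price = lam_seq T Q fee u' e' c p d r \<theta> \<beta> \<eta>"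

definition x_online :: "nat \<Rightarrow> real" where
  "x_online t = fst (online_dec T Q fee u' e' c p d r \<theta> \<beta> \<eta> t)"

definition z_online :: "nat \<Rightarrow> real" where
  "z_online t = snd (online_dec T Q fee u' e' c p d r \<theta> \<beta> \<eta> t)"

definition excess :: "nat \<Rightarrow> real" where
  "excess t = hfun d r t (x_online t) (z_online t) - Q / real T"

lemma price_in_range: "0 \<le> price k \<and> price k \<le> fee"
  unfolding price_def using lam_seq_in_range fee by simp

lemma price_step: "t \<in> {1..T} \<Longrightarrow> price t = proj fee (price (t - 1) + \<eta> t * excess t)"
  unfolding price_def excess_def x_online_def z_online_def using lam_seq_step by simp

lemma online_maximises_lagrangian:
  assumes "t \<in> {1..T}"
  shows "0 \<le> z_online t \<and> z_online t \<le> x_online t \<and> x_online t \<le> 1 \<and>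
    (\<forall>x z. 0 \<le> z \<and> z \<le> x \<and> x \<le> 1 \<longrightarrow>
      ffun u e c p \<theta> \<beta> t x z - price (t - 1) * hfun d r t x z
      \<le> ffun u e c p \<theta> \<beta> t (x_online t) (z_online t)
        - price (t - 1) * hfun d r t (x_online t) (z_online t))"
proof -
  interpret lagrangian_period u e u' e' c p \<theta> \<beta> d r t using period[OF assms] .
  show ?thesis
    using W_fn_maximises_lagrangian[of "price (t - 1)"] price_in_range
    unfolding maximises_lagrangian_def lagrangian_def x_online_def z_online_def price_def online_dec_def
    by simp
qed

lemma excess_bound: "t \<in> {1..T} \<Longrightarrow> \<bar>excess t\<bar> \<le> Xi T Q dbar rbar"
  unfolding excess_def using hfun_deviation_le_Xi d_bounds r_bounds online_maximises_lagrangian by simp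

lemma price_regret:
  assumes "0 \<le> lam" "lam \<le> fee"
  shows "(\<Sum>t=1..T. (lam - price (t - 1)) * excess t)
    \<le> fee\<^sup>2 / 2 * (1 / \<eta> T) + (Xi T Q dbar rbar)\<^sup>2 / 2 * (\<Sum>t=1..T. \<eta> t)"
  by (rule projected_gradient_regret[where L = price and g = excess and \<eta> = \<eta>])
    (use T price_in_range price_step excess_bound \<eta>_pos \<eta>_antimono assms in auto)

lemma price_increment_le:
  assumes t: "t \<in> {1..T}"
  shows "\<bar>price t - price (t - 1)\<bar> \<le> \<eta> t * Xi T Q dbar rbar"
proof -
  have "\<bar>price t - price (t - 1)\<bar> \<le> \<bar>\<eta> t * excess t\<bar>"
    using proj_dist_le[of "price (t - 1)" fee "price (t - 1) + \<eta> t * excess t"]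
      price_in_range[of "t - 1"] price_step[OF t]
    by simp
  also have "\<dots> \<le> \<eta> t * Xi T Q dbar rbar"
    using mult_left_mono[OF excess_bound[OF t], of "\<eta> t"] \<eta>_pos[OF t] by (simp add: abs_mult)
  finally show ?thesis .
qed

lemma online_gap_le:
  assumes feas: "feasible T xs zs"
  shows "gap T Q fee u e u' e' c p d r \<theta> \<beta> \<eta> xs zs
    \<le> (1 / real T) * (fee\<^sup>2 / 2 * (1 / \<eta> T)
      + ((Xi T Q dbar rbar)\<^sup>2 / 2 + Xi T Q dbar rbar * Psi T Q d r xs zs) * (\<Sum>t=1..T. \<eta> t))"
proof -
  define l where "l t = Q / real T - hfun d r t (xs t) (zs t)" for t
  define X where "X = Xi T Q dbar rbar"
  have fluctuation: "(\<Sum>t=1..T. price (t - 1) * (l t - (\<Sum>t=1..T. l t) / real T))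
      \<ge> - (X * Psi T Q d r xs zs * (\<Sum>t=1..T. \<eta> t))"
    unfolding X_def
  proof (rule slowly_varying_weights_sum_ge[where L = price and \<eta> = \<eta>, OF T price_increment_le])
    show "\<bar>real t * ((\<Sum>t=1..T. l t) / real T) - (\<Sum>i=1..t. l i)\<bar> \<le> Psi T Q d r xs zs"
      if "t \<in> {1..T}" for t
      using Psi_ge[OF that] unfolding l_def .
  qed
  have lagrangian: "ffun u e c p \<theta> \<beta> t (xs t) (zs t) + price (t - 1) * l t
      \<le> ffun u e c p \<theta> \<beta> t (x_online t) (z_online t) - price (t - 1) * excess t"
    if "t \<in> {1..T}" for t
    using online_maximises_lagrangian[OF that] feas that
    unfolding l_def excess_def feasible_def by (simp add: algebra_simps)
  have "(\<Sum>t=1..T. hfun d r t (xs t) (zs t)) - Q = - (\<Sum>t=1..T. l t)"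
    and "(\<Sum>t=1..T. hfun d r t (x_online t) (z_online t)) - Q = (\<Sum>t=1..T. excess t)"
    unfolding l_def excess_def using T by (simp_all add: sum_subtractf)
  then have "Spay T Q fee u e c p \<theta> \<beta> d r xs zs - Spay T Q fee u e c p \<theta> \<beta> d r x_online z_online
      \<le> (fee\<^sup>2 / 2 * (1 / \<eta> T) + X\<^sup>2 / 2 * (\<Sum>t=1..T. \<eta> t)) + X * Psi T Q d r xs zs * (\<Sum>t=1..T. \<eta> t)"
    unfolding Spay_def X_def
    using penalised_gap_le[OF T price_in_range lagrangian price_regret fluctuation[unfolded X_def]]
    by simp
  also have "\<dots> = fee\<^sup>2 / 2 * (1 / \<eta> T) + (X\<^sup>2 / 2 + X * Psi T Q d r xs zs) * (\<Sum>t=1..T. \<eta> t)"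
    by (simp add: algebra_simps)
  finally show ?thesis
    unfolding gap_def X_def x_online_def[abs_def] z_online_def[abs_def] using T
    by (simp add: divide_right_mono)
qed

end

theorem theorem2:
  fixes T :: nat and Q fee dbar rbar :: real
    and d r c p \<theta> \<beta> :: "nat \<Rightarrow> real"
    and u e u' e' :: "nat \<Rightarrow> real \<Rightarrow> real"
    and xs zs :: "nat \<Rightarrow> real"
  assumes T: "T \<ge> 1" and Q: "Q > 0" and fee: "fee > 0"
    and dbar: "dbar \<ge> 0" and rbar: "rbar \<ge> 0"
    and d: "\<forall>t\<in>{1..T}. 0 \<le> d t \<and> d t \<le> dbar"
    and r: "\<forall>t\<in>{1..T}. 0 \<le> r t \<and> r t \<le> rbar"
    and pos: "\<forall>t\<in>{1..T}. c t > 0 \<and> p t > 0 \<and> \<theta> t > 0 \<and> \<beta> t > 0"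
    and u_cont: "\<forall>t\<in>{1..T}. continuous_on {0..} (u t)"
    and u_mono: "\<forall>t\<in>{1..T}. mono_on {0..} (u t)"
    and u_conc: "\<forall>t\<in>{1..T}. strict_concave_on {0..} (u t)"
    and u_deriv: "\<forall>t\<in>{1..T}. \<forall>x>0. (u t has_real_derivative u' t x) (at x)"
    and u'_dec: "\<forall>t\<in>{1..T}. \<forall>x y. 0 < x \<and> x < y \<longrightarrow> u' t y < u' t x"
    and u'_bij: "\<forall>t\<in>{1..T}. bij_betw (u' t) {0<..} {0<..}"
    and e_mono: "\<forall>t\<in>{1..T}. mono_on {0..} (e t)"
    and e_conv: "\<forall>t\<in>{1..T}. strict_convex_on {0..} (e t)"
    and e_deriv: "\<forall>t\<in>{1..T}. \<forall>x\<ge>0. (e t has_real_derivative e' t x) (at x within {0..})"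
    and e'_cont: "\<forall>t\<in>{1..T}. continuous_on {0..} (e' t)"
    and e'_inc: "\<forall>t\<in>{1..T}. strict_mono_on {0..} (e' t)"
    and e'_bij: "\<forall>t\<in>{1..T}. bij_betw (e' t) {0..} {0..}"
    and opt_feas: "feasible T xs zs"
    and opt_max: "\<forall>x z. feasible T x z \<longrightarrow>
         Spay T Q fee u e c p \<theta> \<beta> d r x z \<le> Spay T Q fee u e c p \<theta> \<beta> d r xs zs"
  shows "(\<forall>\<eta> :: nat \<Rightarrow> real.
            (\<forall>t\<in>{1..T}. \<eta> t > 0) \<and> (\<forall>s\<in>{1..T}. \<forall>t\<in>{1..T}. s \<le> t \<longrightarrow> \<eta> t \<le> \<eta> s) \<longrightarrow>
            gap T Q fee u e u' e' c p d r \<theta> \<beta> \<eta> xs zs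
              \<le> (1 / real T) * (fee\<^sup>2 / 2 * (1 / \<eta> T)
                   + ((Xi T Q dbar rbar)\<^sup>2 / 2 + Xi T Q dbar rbar * Psi T Q d r xs zs)
                     * (\<Sum>t=1..T. \<eta> t)))
       \<and> gap T Q fee u e u' e' c p d r \<theta> \<beta> (\<lambda>_. fee / (Xi T Q dbar rbar * sqrt (real T))) xs zs
           \<le> fee * (Xi T Q dbar rbar + Psi T Q d r xs zs) / sqrt (real T)"
proof -
  have period: "lagrangian_period u e u' e' c p \<theta> \<beta> d r t" if "t \<in> {1..T}" for t
    using that pos d r u_conc u_deriv u'_dec u'_bij e_mono e_conv e_deriv e'_cont e'_inc e'_bij
    by unfold_locales auto
  have gap_le: "gap T Q fee u e u' e' c p d r \<theta> \<beta> \<eta> xs zs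
      \<le> (1 / real T) * (fee\<^sup>2 / 2 * (1 / \<eta> T)
        + ((Xi T Q dbar rbar)\<^sup>2 / 2 + Xi T Q dbar rbar * Psi T Q d r xs zs) * (\<Sum>t=1..T. \<eta> t))"
    if "\<forall>t\<in>{1..T}. \<eta> t > 0" "\<forall>s\<in>{1..T}. \<forall>t\<in>{1..T}. s \<le> t \<longrightarrow> \<eta> t \<le> \<eta> s" for \<eta>
  proof -
    interpret online_run T Q fee dbar rbar u e u' e' c p \<theta> \<beta> d r \<eta>
      using T fee d r period that unfolding online_run_def by blast
    show ?thesis using online_gap_le[OF opt_feas] .
  qed
  define X where "X = Xi T Q dbar rbar"
  define \<eta> where "\<eta> = fee / (X * sqrt (real T))"
  have X: "X > 0" unfolding X_def Xi_def using Q T by (simp add: less_max_iff_disj)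
  then have "\<eta> > 0" unfolding \<eta>_def using fee T by simp
  then have "gap T Q fee u e u' e' c p d r \<theta> \<beta> (\<lambda>_. \<eta>) xs zs
      \<le> (1 / real T) * (fee\<^sup>2 / 2 * (1 / \<eta>) + (X\<^sup>2 / 2 + X * Psi T Q d r xs zs) * (\<Sum>t=1..T. \<eta>))"
    using gap_le[of "\<lambda>_. \<eta>"] unfolding X_def by simp
  also have "\<dots> = fee * (X + Psi T Q d r xs zs) / sqrt (real T)"
    unfolding \<eta>_def by (rule constant_step_size_bound[OF T fee X])
  finally have "gap T Q fee u e u' e' c p d r \<theta> \<beta> (\<lambda>_. \<eta>) xs zs
      \<le> fee * (X + Psi T Q d r xs zs) / sqrt (real T)" .
  with gap_le show ?thesis unfolding \<eta>_def X_def by blast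
qed

end
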